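(* Consider the closed-loop data-generating system $$y_t = G(q)S(q) r_t + H(q)S(q) e_t,\qquad u_t = S(q) r_t - K(q)H(q)S(q) e_t,$$ where $q^{-1}$ is the delay operator, $e_t$ is Gaussian white noise with variance $\lambda_e$, $r_t$ is a known external reference signal (with spectrum $\Phi_r$) uncorrelated with $e_t$, $K(q)$ is a stabilizing regulator, $S(q)=[1+K(q)G(q)]^{-1}$, and $$G(q)=\frac{L(q)}{\Gamma(q)F(q)},\qquad H(q)=\frac{C(q)}{\Gamma(q)D(q)},$$ with $L(q)=l_1q^{-1}+\dots+l_{m_l}q^{-m_l}$, $\Gamma(q)=1+\gamma_1q^{-1}+\dots+\gamma_{m_\gamma}q^{-m_\gamma}$, $F(q)=1+f_1q^{-1}+\dots+f_{m_f}q^{-m_f}$, $C(q)=1+c_1q^{-1}+\dots+c_{m_c}q^{-m_c}$, $D(q)=1+d_1q^{-1}+\dots+d_{m_d}q^{-m_d}$ ($m_l,m_\gamma,m_f,m_c,m_d$ finite positive integers). Assume $C(q)$ and $D(q)$ are stable polynomials, $F(q)$ has no roots on the unit circle, $F(q)$ and $D(q)$ are co-prime, and $H(q)$ is stable and inversely stable. Factor $F(q)=F_s(q)F_a(q)$, where $F_s$ and $F_a$ are monic polynomials in $q^{-1}$ containing, respectively, the roots of $F$ of magnitude less than one and the roots of $F$ of magnitude larger than one; if $p_1,\dots,p_{n_a}$ are the roots of $F$ of magnitude larger than one, let $F_a^*(q)=\prod_{k=1}^{n_a}(1-p_k^{-1}q^{-1})$. Consider the cost $$J=\mathbb{E}\left[A(q)y_t-B(q)u_t\right]^2$$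 over infinite-order ARX polynomials $A(q)=1+\sum_{k=1}^\infty a_kq^{-k}$ and $B(q)=\sum_{k=1}^\infty b_kq^{-k}$. Then the minimizers of $J$ are $$\bar A(q)=\frac{1}{H(q)}\frac{F_a(q)}{F_a^*(q)}=\frac{\Gamma(q)D(q)}{C(q)}\frac{F_a(q)}{F_a^*(q)},\qquad \bar B(q)=\frac{1}{H(q)}\frac{L(q)}{\Gamma(q)F_s(q)F_a^*(q)}=\frac{D(q)}{C(q)}\frac{L(q)}{F_s(q)F_a^*(q)},$$ and the attained global minimum is $$J^\star=\left|\frac{F_a(e^{i\omega})}{F_a^*(e^{i\omega})}\right|^2\lambda_e.$$
   Context: A polynomial in $q^{-1}$ is called stable if all its roots (values of $q$ at which it vanishes) lie strictly inside the unit circle; a transfer function is stable (resp. inversely stable) if it (resp. its inverse) has all poles strictly inside the unit circle. Roots of magnitude larger than one are called anti-stable. *)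

theory Defs
  imports "HOL-Analysis.Analysis" "HOL-Computational_Algebra.Computational_Algebra"
begin

text \<open>Polynomials in the delay operator q^{-1} are represented as polynomials in the
  variable z = q^{-1}: the polynomial P(q) = p0 + p1 q^{-1} + ... is the Isabelle polynomial
  [:p0, p1, ...:], and its value at q is  poly P (inverse q).\<close>

abbreviation cpoly :: "real poly \<Rightarrow> complex poly" where
  "cpoly P \<equiv> map_poly complex_of_real P"

definition qeval :: "real poly \<Rightarrow> complex \<Rightarrow> complex" where
  "qeval P q = poly (cpoly P) (inverse q)"

definition qroots :: "complex poly \<Rightarrow> complex set" where
  "qroots P = {q. q \<noteq> 0 \<and> poly P (inverse q) = 0}"

definition stable_qpoly :: "complex poly \<Rightarrow> bool" where
  "stable_qpoly P \<longleftrightarrow> P \<noteq> 0 \<and> (\<forall>q\<in>qroots P. cmod q < 1)"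

text \<open>The rational transfer function N(q)/D(q) (N, D polynomials in q^{-1}) is stable:
  all its poles lie strictly inside the unit circle (it is causal, i.e. has no pole at
  q = infinity, and after cancellation its denominator is a stable polynomial).\<close>
definition tf_stable :: "complex poly \<Rightarrow> complex poly \<Rightarrow> bool" where
  "tf_stable N D \<longleftrightarrow> D \<noteq> 0 \<and>
     (\<exists>N' D'. N * D' = N' * D \<and> stable_qpoly D' \<and> poly D' 0 \<noteq> 0)"

definition tf_inv_stable :: "complex poly \<Rightarrow> complex poly \<Rightarrow> bool" where
  "tf_inv_stable N D \<longleftrightarrow> N \<noteq> 0 \<and> tf_stable D N"

text \<open>The regulator K = Kn/Kd (a proper rational transfer function) is stabilizing for the
  plant G = L/(Gamma F): the closed-loop characteristic polynomial
  Gamma F Kd + L Kn is stable.\<close>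
definition stabilizing :: "real poly \<Rightarrow> real poly \<Rightarrow> real poly \<Rightarrow> real poly \<Rightarrow> real poly \<Rightarrow> bool"
  where "stabilizing L Gm F Kn Kd \<longleftrightarrow>
     coeff Kd 0 \<noteq> 0 \<and> stable_qpoly (cpoly (Gm * F * Kd + L * Kn))"

text \<open>F_a^*(q) = prod_k (1 - p_k^{-1} q^{-1}) over the roots p_k of F_a (with multiplicity).
  A root p of F_a (in q) is a root z0 = 1/p in the variable z = q^{-1}, so the factor is
  1 - z0 z.\<close>
definition Fa_star :: "real poly \<Rightarrow> complex poly" where
  "Fa_star Fa = (\<Prod>z0\<in>{z. poly (cpoly Fa) z = 0}. [:1, - z0:] ^ order z0 (cpoly Fa))"

text \<open>Infinite-order ARX polynomials A(q) = sum_k a_k q^{-k}, given by coefficient sequences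
  (absolutely summable, so that A is defined for |q| >= 1).\<close>
definition arx_resp :: "(nat \<Rightarrow> real) \<Rightarrow> complex \<Rightarrow> complex" where
  "arx_resp a z = (\<Sum>k. complex_of_real (a k) * z ^ k)"

definition arx_A :: "(nat \<Rightarrow> real) \<Rightarrow> bool" where
  "arx_A a \<longleftrightarrow> a 0 = 1 \<and> summable (\<lambda>k. \<bar>a k\<bar>)"

definition arx_B :: "(nat \<Rightarrow> real) \<Rightarrow> bool" where
  "arx_B b \<longleftrightarrow> b 0 = 0 \<and> summable (\<lambda>k. \<bar>b k\<bar>)"

text \<open>Closed-loop transfer functions evaluated at q (z = q^{-1}):
  S = 1/(1+KG), G S, K S, and H.\<close>
definition cl_char :: "real poly \<Rightarrow> real poly \<Rightarrow> real poly \<Rightarrow> real poly \<Rightarrow> real poly \<Rightarrow> complex \<Rightarrow> complex"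
  where "cl_char L Gm F Kn Kd q = qeval Gm q * qeval F q * qeval Kd q + qeval L q * qeval Kn q"

definition tfS :: "real poly \<Rightarrow> real poly \<Rightarrow> real poly \<Rightarrow> real poly \<Rightarrow> real poly \<Rightarrow> complex \<Rightarrow> complex"
  where "tfS L Gm F Kn Kd q = qeval Gm q * qeval F q * qeval Kd q / cl_char L Gm F Kn Kd q"

definition tfGS :: "real poly \<Rightarrow> real poly \<Rightarrow> real poly \<Rightarrow> real poly \<Rightarrow> real poly \<Rightarrow> complex \<Rightarrow> complex"
  where "tfGS L Gm F Kn Kd q = qeval L q * qeval Kd q / cl_char L Gm F Kn Kd q"

definition tfKS :: "real poly \<Rightarrow> real poly \<Rightarrow> real poly \<Rightarrow> real poly \<Rightarrow> real poly \<Rightarrow> complex \<Rightarrow> complex"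
  where "tfKS L Gm F Kn Kd q = qeval Gm q * qeval F q * qeval Kn q / cl_char L Gm F Kn Kd q"

definition tfH :: "real poly \<Rightarrow> real poly \<Rightarrow> real poly \<Rightarrow> complex \<Rightarrow> complex"
  where "tfH C Gm D q = qeval C q / (qeval Gm q * qeval D q)"

text \<open>The cost J = E[A(q) y_t - B(q) u_t]^2 for the closed-loop system
  y = G S r + H S e,  u = S r - K H S e  (e white with variance lambda_e, r with spectrum
  Phi_r, uncorrelated), computed by Parseval's formula from the spectrum of A y - B u:
  J = 1/(2 pi) int_{-pi}^{pi} |A G S - B S|^2 Phi_r + |A H S + B K H S|^2 lambda_e d omega.\<close>
definition arx_cost ::
  "real poly \<Rightarrow> real poly \<Rightarrow> real poly \<Rightarrow> real poly \<Rightarrow> real poly \<Rightarrow> real poly \<Rightarrow> real poly \<Rightarrow>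
   real \<Rightarrow> (real \<Rightarrow> real) \<Rightarrow> (nat \<Rightarrow> real) \<Rightarrow> (nat \<Rightarrow> real) \<Rightarrow> real" where
  "arx_cost L Gm F C D Kn Kd lam Phi a b =
     (1 / (2 * pi)) * integral {-pi..pi} (\<lambda>w.
        let q = cis w; A = arx_resp a (inverse q); B = arx_resp b (inverse q);
            S = tfS L Gm F Kn Kd q; GS = tfGS L Gm F Kn Kd q;
            KS = tfKS L Gm F Kn Kd q; H = tfH C Gm D q
        in (cmod (A * GS - B * S))\<^sup>2 * Phi w + (cmod (A * H * S + B * H * KS))\<^sup>2 * lam)"

end

theory Submission
  imports Defs "HOL-Complex_Analysis.Cauchy_Integral_Formula"
begin

text \<open>Write z = 1/q, so that the unit circle is z = exp (-i w). There the prediction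
  error A y - B u splits into an r-driven part, weighted by Phi_r \<ge> 0, and an e-driven part
  with transfer function (F_a / F_a^* ) U, where
  U = C F_s F_a^* (A K_d + B K_n) / (D (\<Gamma> F K_d + L K_n)).
  The factor F_a / F_a^* is all-pass with modulus |lead_coeff F_a|, and U has an absolutely
  summable power series in z with U(0) = 1, because A is monic, B is strictly causal and the
  closed loop is stable. By the mean-value property the mean of |U|^2 over the circle is at
  least |U(0)|^2 = 1, hence J \<ge> |lead_coeff F_a|^2 \<lambda>_e, and the proposed A and B annihilate
  the r-driven part and make U = 1.\<close>

section \<open>Absolutely convergent power series on the closed unit disc\<close>

definition disc_abs_powser :: "(complex \<Rightarrow> complex) \<Rightarrow> bool" where
  "disc_abs_powser f \<longleftrightarrow> (\<exists>c. summable (\<lambda>k. cmod (c k)) \<and>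
     (\<forall>z. cmod z \<le> 1 \<longrightarrow> (\<lambda>k. c k * z ^ k) sums f z))"

lemma disc_abs_powserI:
  "summable (\<lambda>k. cmod (c k)) \<Longrightarrow> (\<And>z. cmod z \<le> 1 \<Longrightarrow> (\<lambda>k. c k * z ^ k) sums f z)
    \<Longrightarrow> disc_abs_powser f"
  unfolding disc_abs_powser_def by blast

lemma disc_abs_powser_cong:
  "disc_abs_powser f \<Longrightarrow> (\<And>z. cmod z \<le> 1 \<Longrightarrow> f z = g z) \<Longrightarrow> disc_abs_powser g"
  unfolding disc_abs_powser_def by metis

lemma norm_powser_term_le: "cmod z \<le> 1 \<Longrightarrow> norm (c * z ^ k) \<le> cmod c"
  by (simp add: norm_mult norm_power mult_left_le power_le_one)

lemma disc_abs_powser_suminf: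
  assumes "summable (\<lambda>k. cmod (c k))"
  shows "disc_abs_powser (\<lambda>z. \<Sum>k. c k * z ^ k)"
proof -
  have "summable (\<lambda>k. c k * z ^ k)" if "cmod z \<le> 1" for z
    by (rule summable_norm_cancel, rule summable_comparison_test'[OF assms])
      (use norm_powser_term_le[OF that] in simp)
  then show ?thesis
    using assms by (blast intro: disc_abs_powserI summable_sums)
qed

lemma disc_abs_powser_poly: "disc_abs_powser (poly p)"
proof -
  have "summable (\<lambda>k. cmod (coeff p k))"
    using sums_summable[OF sums_finite[of "{..degree p}" "\<lambda>k. cmod (coeff p k)"]]
    by (simp add: coeff_eq_0)
  moreover have "(\<lambda>k. coeff p k * z ^ k) sums poly p z" for z
    using sums_finite[of "{..degree p}" "\<lambda>k. coeff p k * z ^ k"]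
    by (simp add: poly_altdef coeff_eq_0)
  ultimately show ?thesis
    by (rule disc_abs_powserI)
qed

lemma disc_abs_powser_add:
  assumes "disc_abs_powser f" "disc_abs_powser g"
  shows "disc_abs_powser (\<lambda>z. f z + g z)"
proof -
  obtain c where c: "summable (\<lambda>k. cmod (c k))" "\<And>z. cmod z \<le> 1 \<Longrightarrow> (\<lambda>k. c k * z ^ k) sums f z"
    using assms(1) unfolding disc_abs_powser_def by blast
  obtain d where d: "summable (\<lambda>k. cmod (d k))" "\<And>z. cmod z \<le> 1 \<Longrightarrow> (\<lambda>k. d k * z ^ k) sums g z"
    using assms(2) unfolding disc_abs_powser_def by blast
  show ?thesis
  proof (rule disc_abs_powserI)
    show "summable (\<lambda>k. cmod (c k + d k))"
      by (rule summable_comparison_test'[OF summable_add[OF c(1) d(1)]]) (simp add: norm_triangle_ineq)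
    show "(\<lambda>k. (c k + d k) * z ^ k) sums (f z + g z)" if "cmod z \<le> 1" for z
      using sums_add[OF c(2)[OF that] d(2)[OF that]] by (simp add: distrib_right)
  qed
qed

lemma disc_abs_powser_mult:
  assumes "disc_abs_powser f" "disc_abs_powser g"
  shows "disc_abs_powser (\<lambda>z. f z * g z)"
proof -
  obtain c where c: "summable (\<lambda>k. cmod (c k))" "\<And>z. cmod z \<le> 1 \<Longrightarrow> (\<lambda>k. c k * z ^ k) sums f z"
    using assms(1) unfolding disc_abs_powser_def by blast
  obtain d where d: "summable (\<lambda>k. cmod (d k))" "\<And>z. cmod z \<le> 1 \<Longrightarrow> (\<lambda>k. d k * z ^ k) sums g z"
    using assms(2) unfolding disc_abs_powser_def by blast
  define e where "e k = (\<Sum>i\<le>k. c i * d (k - i))" for k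
  have "(\<lambda>k. \<Sum>i\<le>k. cmod (c i) * cmod (d (k - i))) sums ((\<Sum>k. cmod (c k)) * (\<Sum>k. cmod (d k)))"
    by (rule Cauchy_product_sums) (use c(1) d(1) in auto)
  then have "summable (\<lambda>k. cmod (e k))"
    by (intro summable_comparison_test[OF _ sums_summable])
      (auto simp: e_def norm_mult intro!: order.trans[OF norm_sum])
  moreover have "(\<lambda>k. e k * z ^ k) sums (f z * g z)" if z: "cmod z \<le> 1" for z
  proof -
    have "summable (\<lambda>k. norm (c k * z ^ k))"
      by (rule summable_comparison_test'[OF c(1)]) (simp add: norm_powser_term_le[OF z])
    moreover have "summable (\<lambda>k. norm (d k * z ^ k))"
      by (rule summable_comparison_test'[OF d(1)]) (simp add: norm_powser_term_le[OF z])
    ultimately have "(\<lambda>k. \<Sum>i\<le>k. (c i * z ^ i) * (d (k - i) * z ^ (k - i)))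
        sums ((\<Sum>k. c k * z ^ k) * (\<Sum>k. d k * z ^ k))"
      by (rule Cauchy_product_sums)
    moreover have "(\<Sum>k. c k * z ^ k) = f z" "(\<Sum>k. d k * z ^ k) = g z"
      using c(2)[OF z] d(2)[OF z] by (simp_all add: sums_iff)
    moreover have "(\<Sum>i\<le>k. (c i * z ^ i) * (d (k - i) * z ^ (k - i))) = e k * z ^ k" for k
      unfolding e_def sum_distrib_right
      by (intro sum.cong refl) (simp add: power_add[symmetric] algebra_simps)
    ultimately show ?thesis
      by simp
  qed
  ultimately show ?thesis
    by (rule disc_abs_powserI)
qed

lemma disc_abs_powser_0:
  fixes f :: "complex \<Rightarrow> complex"
  assumes "summable (\<lambda>k. cmod (c k))" "\<And>z. cmod z \<le> 1 \<Longrightarrow> (\<lambda>k. c k * z ^ k) sums f z"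
  shows "f 0 = c 0"
  using assms(2)[of 0] powser_sums_zero sums_unique2 by fastforce

lemma continuous_on_disc_abs_powser:
  assumes "disc_abs_powser f"
  shows "continuous_on (cball 0 1) f"
proof -
  obtain c where c: "summable (\<lambda>k. cmod (c k))" "\<And>z. cmod z \<le> 1 \<Longrightarrow> (\<lambda>k. c k * z ^ k) sums f z"
    using assms unfolding disc_abs_powser_def by blast
  have lim: "uniform_limit (cball 0 1) (\<lambda>n z. \<Sum>k<n. c k * z ^ k) (\<lambda>z. \<Sum>k. c k * z ^ k) sequentially"
    by (rule Weierstrass_m_test[OF _ c(1)]) (simp add: norm_powser_term_le)
  have "\<forall>\<^sub>F n in sequentially. continuous_on (cball 0 1) (\<lambda>z. \<Sum>k<n. c k * z ^ k)"
    by (intro always_eventually allI continuous_intros)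
  then have cont: "continuous_on (cball 0 1) (\<lambda>z. \<Sum>k. c k * z ^ k)"
    by (rule uniform_limit_theorem[OF _ lim trivial_limit_sequentially])
  have eq: "(\<Sum>k. c k * z ^ k) = f z" if "z \<in> cball 0 1" for z
    using c(2) that by (simp add: sums_iff)
  show ?thesis
    by (rule continuous_on_eq[OF cont eq])
qed

lemma continuous_on_circle_param:
  assumes "continuous_on (cball 0 1) f"
  shows "continuous_on {-pi..pi} (\<lambda>w. f (cis (- w)))"
  by (rule continuous_on_compose2[OF assms]) (auto intro!: continuous_intros)

lemma has_integral_cis_neg_power:
  "((\<lambda>w. cis (- w) ^ k) has_integral (if k = 0 then 2 * pi else 0)) {-pi..pi}"
proof (cases "k = 0")
  case True
  then show ?thesis
    using has_integral_const_real[of "1::complex" "-pi" pi] by (simp add: scaleR_conv_of_real)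
next
  case False
  define F where "F w = cis (- (real k * w)) * (\<i> / of_nat k)" for w
  have "((\<lambda>w. cis (- (real k * w))) has_integral (F pi - F (-pi))) {-pi..pi}"
  proof (rule fundamental_theorem_of_calculus)
    fix x :: real
    have "((\<lambda>w. cis (- (real k * w))) has_derivative
        (\<lambda>t. (- (real k * t)) *\<^sub>R (\<i> * cis (- (real k * x))))) (at x within {-pi..pi})"
      by (rule has_derivative_cis) (auto intro!: derivative_eq_intros)
    then have "(F has_derivative (\<lambda>t. ((- (real k * t)) *\<^sub>R (\<i> * cis (- (real k * x)))) * (\<i> / of_nat k)))
        (at x within {-pi..pi})"
      unfolding F_def by (intro derivative_eq_intros) auto
    moreover have "(\<lambda>t. ((- (real k * t)) *\<^sub>R (\<i> * cis (- (real k * x)))) * (\<i> / of_nat k))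
        = (\<lambda>t. t *\<^sub>R cis (- (real k * x)))"
      using False by (auto simp: scaleR_conv_of_real field_simps)
    ultimately show "(F has_vector_derivative cis (- (real k * x))) (at x within {-pi..pi})"
      unfolding has_vector_derivative_def by simp
  qed simp
  moreover have "F pi = F (-pi)"
    unfolding F_def by (simp add: complex_eq_iff sin_npi)
  moreover have "cis (- w) ^ k = cis (- (real k * w))" for w
    by (subst Complex.DeMoivre) simp
  ultimately show ?thesis
    using False by simp
qed

lemma has_integral_disc_abs_powser_circle:
  assumes "disc_abs_powser f"
  shows "((\<lambda>w. f (cis (- w))) has_integral (of_real (2 * pi) * f 0)) {-pi..pi}"
proof -
  obtain c where c: "summable (\<lambda>k. cmod (c k))" "\<And>z. cmod z \<le> 1 \<Longrightarrow> (\<lambda>k. c k * z ^ k) sums f z"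
    using assms unfolding disc_abs_powser_def by blast
  have lim: "uniform_limit {-pi..pi} (\<lambda>n w. \<Sum>k<n. c k * cis (- w) ^ k)
      (\<lambda>w. \<Sum>k. c k * cis (- w) ^ k) sequentially"
    by (rule Weierstrass_m_test[OF _ c(1)]) (simp add: norm_powser_term_le)
  have "continuous_on {-pi..pi} (\<lambda>w. \<Sum>k<n. c k * cis (- w) ^ k)" for n
    by (intro continuous_intros)
  then obtain I J where
    I: "\<And>n. ((\<lambda>w. \<Sum>k<n. c k * cis (- w) ^ k) has_integral I n) {-pi..pi}" and
    J: "((\<lambda>w. \<Sum>k. c k * cis (- w) ^ k) has_integral J) {-pi..pi}" and
    IJ: "I \<longlonglongrightarrow> J"
    using uniform_limit_integral[OF lim _ trivial_limit_sequentially] by blast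
  have "I n = 2 * pi * c 0" if "n \<ge> 1" for n
  proof -
    have "((\<lambda>w. \<Sum>k<n. c k * cis (- w) ^ k) has_integral
        (\<Sum>k<n. c k * (if k = 0 then 2 * pi else 0))) {-pi..pi}"
      by (intro has_integral_sum has_integral_mult_right has_integral_cis_neg_power) simp
    moreover have "(\<Sum>k<n. c k * complex_of_real (if k = 0 then 2 * pi else 0)) = 2 * pi * c 0"
      using that by (simp add: if_distrib sum.delta' mult.commute cong: if_cong)
    ultimately show ?thesis
      using I has_integral_unique by metis
  qed
  then have "I \<longlonglongrightarrow> 2 * pi * c 0"
    by (intro tendsto_eventually) (auto simp: eventually_sequentially)
  then have "J = of_real (2 * pi) * f 0"
    using IJ LIMSEQ_unique disc_abs_powser_0[OF c] by metis
  moreover have "(\<Sum>k. c k * cis (- w) ^ k) = f (cis (- w))" for w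
    using c(2)[of "cis (- w)"] by (simp add: sums_iff)
  ultimately show ?thesis
    using J by simp
qed

lemma cmod_power2_ge_Re_mult_cnj: "2 * Re (cnj c * u) - (cmod c)\<^sup>2 \<le> (cmod u)\<^sup>2"
proof -
  have "0 \<le> (Re u - Re c)\<^sup>2 + (Im u - Im c)\<^sup>2"
    by simp
  then show ?thesis
    unfolding cmod_power2 by (simp add: power2_eq_square algebra_simps)
qed

lemma integral_circle_cmod_power2_ge:
  assumes "disc_abs_powser f"
  shows "2 * pi * (cmod (f 0))\<^sup>2 \<le> integral {-pi..pi} (\<lambda>w. (cmod (f (cis (- w))))\<^sup>2)"
proof -
  define c where "c = f 0"
  have "((\<lambda>w. cnj c * f (cis (- w))) has_integral (cnj c * (of_real (2 * pi) * c))) {-pi..pi}"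
    unfolding c_def by (intro has_integral_mult_right has_integral_disc_abs_powser_circle assms)
  moreover have "Re (cnj c * (of_real (2 * pi) * c)) = 2 * pi * (cmod c)\<^sup>2"
    unfolding cmod_power2 by (simp add: power2_eq_square algebra_simps)
  ultimately have "((\<lambda>w. Re (cnj c * f (cis (- w)))) has_integral 2 * pi * (cmod c)\<^sup>2) {-pi..pi}"
    using has_integral_Re by metis
  moreover have "((\<lambda>w. (cmod c)\<^sup>2) has_integral 2 * pi * (cmod c)\<^sup>2) {-pi..pi}"
    using has_integral_const_real[of "(cmod c)\<^sup>2" "-pi" pi] by simp
  ultimately have "((\<lambda>w. 2 * Re (cnj c * f (cis (- w))) - (cmod c)\<^sup>2) has_integral
      2 * (2 * pi * (cmod c)\<^sup>2) - 2 * pi * (cmod c)\<^sup>2) {-pi..pi}"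
    by (intro has_integral_diff has_integral_mult_right)
  then have lower: "((\<lambda>w. 2 * Re (cnj c * f (cis (- w))) - (cmod c)\<^sup>2) has_integral
      2 * pi * (cmod c)\<^sup>2) {-pi..pi}"
    by (simp add: algebra_simps)
  have "continuous_on {-pi..pi} (\<lambda>w. (cmod (f (cis (- w))))\<^sup>2)"
    using continuous_on_circle_param[OF continuous_on_disc_abs_powser[OF assms]]
    by (intro continuous_intros)
  then have "(\<lambda>w. (cmod (f (cis (- w))))\<^sup>2) integrable_on {-pi..pi}"
    by (rule integrable_continuous_real)
  then have "integral {-pi..pi} (\<lambda>w. 2 * Re (cnj c * f (cis (- w))) - (cmod c)\<^sup>2)
      \<le> integral {-pi..pi} (\<lambda>w. (cmod (f (cis (- w))))\<^sup>2)"
    by (intro integral_le has_integral_integrable[OF lower] cmod_power2_ge_Re_mult_cnj)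
  then show ?thesis
    using integral_unique[OF lower] by (simp add: c_def)
qed

section \<open>Real polynomials in the delay operator\<close>

abbreviation zeval :: "real poly \<Rightarrow> complex \<Rightarrow> complex" where
  "zeval p z \<equiv> poly (cpoly p) z"

lemma cpoly_mult [simp]: "cpoly (p * q) = cpoly p * cpoly q"
  by (intro poly_eqI) (simp add: coeff_map_poly coeff_mult)

lemma cpoly_add [simp]: "cpoly (p + q) = cpoly p + cpoly q"
  by (intro poly_eqI) (simp add: coeff_map_poly)

lemma cpoly_eq_0_iff [simp]: "cpoly p = 0 \<longleftrightarrow> p = 0"
  by (simp add: poly_eq_iff coeff_map_poly)

lemma cpoly_smult: "cpoly (smult c p) = smult (of_real c) (cpoly p)"
  by (intro poly_eqI) (simp add: coeff_map_poly)

lemma cpoly_reflect: "cpoly (reflect_poly p) = reflect_poly (cpoly p)"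
  by (intro poly_eqI) (simp add: coeff_map_poly coeff_reflect_poly degree_map_poly)

lemma zeval_0: "zeval p 0 = of_real (coeff p 0)"
  by (simp add: poly_0_coeff_0 coeff_map_poly)

lemma zeval_cnj: "zeval p (cnj z) = cnj (zeval p z)"
  by (rule poly_cnj_real[symmetric]) (simp add: coeff_map_poly)

lemma poly_nonzero_in_cball_if_qroots_inside:
  fixes P :: "complex poly"
  assumes "\<forall>q\<in>qroots P. cmod q < 1" "poly P 0 \<noteq> 0" "cmod z \<le> 1"
  shows "poly P z \<noteq> 0"
proof
  assume "poly P z = 0"
  with assms(2) have "z \<noteq> 0"
    by auto
  with \<open>poly P z = 0\<close> have "inverse z \<in> qroots P"
    by (simp add: qroots_def)
  with assms(1) have "cmod (inverse z) < 1"
    by blast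
  with assms(3) \<open>z \<noteq> 0\<close> show False
    by (simp add: norm_inverse inverse_less_1_iff)
qed

lemma stable_qpoly_nonzero_in_cball:
  "stable_qpoly P \<Longrightarrow> poly P 0 \<noteq> 0 \<Longrightarrow> cmod z \<le> 1 \<Longrightarrow> poly P z \<noteq> 0"
  unfolding stable_qpoly_def using poly_nonzero_in_cball_if_qroots_inside by blast

lemma tf_stable_denominator_nonzero_circle:
  assumes "tf_stable N Dn" "cmod z = 1" "poly N z \<noteq> 0"
  shows "poly Dn z \<noteq> 0"
proof
  assume "poly Dn z = 0"
  obtain N' D' where ND: "N * D' = N' * Dn" "stable_qpoly D'"
    using assms(1) unfolding tf_stable_def by blast
  from arg_cong[OF ND(1), of "\<lambda>p. poly p z"] have "poly N z * poly D' z = 0"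
    using \<open>poly Dn z = 0\<close> by simp
  with assms(2,3) have "inverse z \<in> qroots D'"
    by (auto simp: qroots_def)
  with ND(2) assms(2) show False
    by (auto simp: stable_qpoly_def norm_inverse)
qed

lemma poly_reflect_nonzero_in_cball:
  fixes P :: "complex poly"
  assumes "P \<noteq> 0" "\<forall>q\<in>qroots P. 1 < cmod q" "cmod z \<le> 1"
  shows "poly (reflect_poly P) z \<noteq> 0"
proof (cases "z = 0")
  case True
  with assms(1) show ?thesis
    by (simp add: poly_0_coeff_0)
next
  case False
  have "poly P (inverse z) \<noteq> 0"
  proof
    assume "poly P (inverse z) = 0"
    with False have "z \<in> qroots P"
      by (simp add: qroots_def)
    with assms(2,3) show False
      by force
  qed
  with False show ?thesis
    by (simp add: poly_reflect_poly_nz)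
qed

lemma inverse_eq_cnj_circle: "cmod z = 1 \<Longrightarrow> inverse z = cnj z"
  by (rule inverse_unique) (simp add: complex_norm_square[symmetric])

lemma norm_poly_reflect_circle:
  assumes "cmod z = 1"
  shows "cmod (poly (reflect_poly (cpoly p)) z) = cmod (zeval p z)"
proof -
  have "z \<noteq> 0"
    using assms by auto
  then have "poly (reflect_poly (cpoly p)) z = z ^ degree (cpoly p) * cnj (zeval p z)"
    using assms by (simp add: poly_reflect_poly_nz inverse_eq_cnj_circle flip: zeval_cnj)
  then show ?thesis
    using assms by (simp add: norm_mult norm_power)
qed

lemma Fa_star_eq_reflect:
  fixes P :: "real poly"
  assumes "P \<noteq> 0"
  shows "Fa_star P = cpoly (smult (1 / lead_coeff P) (reflect_poly P))"
proof -
  define Q where "Q = cpoly P"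
  define Z where "Z = {z. poly Q z = 0}"
  define lc where "lc = lead_coeff Q"
  have lc: "lc = of_real (lead_coeff P)" "lc \<noteq> 0"
    using assms by (simp_all add: lc_def Q_def coeff_map_poly degree_map_poly)
  have Fa_star: "poly (Fa_star P) z = (\<Prod>z0\<in>Z. (1 - z0 * z) ^ order z0 Q)" for z
    unfolding Fa_star_def Z_def Q_def by (simp add: poly_prod mult.commute)
  have decomp: "smult lc (\<Prod>z0\<in>Z. [:- z0, 1:] ^ order z0 Q) = Q"
    unfolding Z_def lc_def by (rule complex_poly_decompose)
  then have "degree Q = degree (\<Prod>z0\<in>Z. [:- z0, 1:] ^ order z0 Q)"
    using lc by (metis degree_smult_eq)
  then have deg: "degree Q = (\<Sum>z0\<in>Z. order z0 Q)"
    by (simp add: degree_prod_eq_sum_degree degree_linear_power)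
  have "poly (Fa_star P) z = poly (smult (1 / lc) (reflect_poly Q)) z" for z
  proof (cases "z = 0")
    case True
    then show ?thesis
      using lc by (simp add: Fa_star) (simp add: poly_0_coeff_0 lc_def)
  next
    case False
    have "z ^ degree Q * poly Q (inverse z)
        = lc * ((\<Prod>z0\<in>Z. z ^ order z0 Q) * (\<Prod>z0\<in>Z. (inverse z - z0) ^ order z0 Q))"
      by (subst (2) decomp[symmetric]) (simp add: deg power_sum poly_prod)
    also have "\<dots> = lc * (\<Prod>z0\<in>Z. (1 - z0 * z) ^ order z0 Q)"
      using False by (simp add: prod.distrib[symmetric] power_mult_distrib[symmetric] algebra_simps)
    finally show ?thesis
      using False lc by (simp add: Fa_star poly_reflect_poly_nz)
  qed
  then have "Fa_star P = smult (1 / lc) (reflect_poly Q)"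
    by (simp add: poly_eq_poly_eq_iff[symmetric] fun_eq_iff del: poly_smult)
  then show ?thesis
    using lc by (simp add: cpoly_smult cpoly_reflect Q_def)
qed

section \<open>Rational transfer functions as ARX responses\<close>

lemma arx_resp_0: "arx_resp a 0 = of_real (a 0)"
  unfolding arx_resp_def using powser_sums_zero sums_unique by metis

lemma disc_abs_powser_arx_resp:
  "summable (\<lambda>k. \<bar>a k\<bar>) \<Longrightarrow> disc_abs_powser (arx_resp a)"
  unfolding arx_resp_def by (rule disc_abs_powser_suminf) simp

lemma sums_powser_Re_coeffs:
  assumes "(\<lambda>n. c n * z ^ n) sums s" "(\<lambda>n. c n * cnj z ^ n) sums cnj s"
  shows "(\<lambda>n. of_real (Re (c n)) * z ^ n) sums s"
proof -
  have "(\<lambda>n. cnj (c n) * z ^ n) sums s"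
    using sums_cnj[THEN iffD2, of "\<lambda>n. c n * cnj z ^ n" "cnj s"] assms(2) by simp
  then have "(\<lambda>n. (c n * z ^ n + cnj (c n) * z ^ n) / 2) sums ((s + s) / 2)"
    by (intro sums_divide sums_add assms(1))
  moreover have "(c n * z ^ n + cnj (c n) * z ^ n) / 2 = of_real (Re (c n)) * z ^ n" for n
    by (simp add: complex_add_cnj flip: distrib_right)
  ultimately show ?thesis
    by simp
qed

lemma poly_nonzero_in_larger_ball:
  fixes Q :: "complex poly"
  assumes Q: "\<And>z. cmod z \<le> 1 \<Longrightarrow> poly Q z \<noteq> 0"
  shows "\<exists>r>1. \<forall>z. cmod z < r \<longrightarrow> poly Q z \<noteq> 0"
proof -
  define Z where "Z = {z. poly Q z = 0}"
  define r where "r = Min (insert 2 (cmod ` Z))"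
  have "finite Z"
    unfolding Z_def by (rule poly_roots_finite) (use Q[of 0] in auto)
  have "r \<in> insert 2 (cmod ` Z)"
    unfolding r_def using \<open>finite Z\<close> by (intro Min_in) auto
  moreover have "1 < cmod z" if "z \<in> Z" for z
    using Q[of z] that by (force simp: Z_def)
  ultimately have "1 < r"
    by auto
  moreover have "poly Q z \<noteq> 0" if "cmod z < r" for z
  proof
    assume "poly Q z = 0"
    then have "r \<le> cmod z"
      unfolding r_def using \<open>finite Z\<close> by (intro Min_le) (auto simp: Z_def)
    with that show False
      by simp
  qed
  ultimately show ?thesis
    by blast
qed

lemma real_poly_quotient_arx_resp:
  fixes P Q :: "real poly"
  assumes Q: "\<And>z. cmod z \<le> 1 \<Longrightarrow> zeval Q z \<noteq> 0"
  shows "\<exists>a. summable (\<lambda>k. \<bar>a k\<bar>) \<and> (\<forall>z. cmod z \<le> 1 \<longrightarrow> arx_resp a z = zeval P z / zeval Q z)"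
proof -
  obtain r where "1 < r" and r: "\<And>z. cmod z < r \<Longrightarrow> zeval Q z \<noteq> 0"
    using poly_nonzero_in_larger_ball[of "cpoly Q"] Q by blast
  define f where "f z = zeval P z / zeval Q z" for z
  define c where "c n = (deriv ^^ n) f 0 / fact n" for n
  have holo: "f holomorphic_on ball 0 r"
    unfolding f_def using r by (intro holomorphic_intros) auto
  have series: "(\<lambda>n. c n * z ^ n) sums f z" if "cmod z < r" for z
    using holomorphic_power_series[OF holo, of z] that by (simp add: c_def)
  define \<rho> where "\<rho> = (1 + r) / 2"
  have "1 < \<rho>" "\<rho> < r"
    using \<open>1 < r\<close> by (simp_all add: \<rho>_def)
  then have "summable (\<lambda>n. c n * of_real \<rho> ^ n)"
    using series[of "of_real \<rho>"] by (simp add: sums_summable)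
  then have "summable (\<lambda>n. norm (c n * 1 ^ n))"
    by (rule powser_insidea) (use \<open>1 < \<rho>\<close> in simp)
  then have "summable (\<lambda>n. \<bar>Re (c n)\<bar>)"
    by (rule summable_comparison_test') (simp add: abs_Re_le_cmod)
  moreover have "arx_resp (\<lambda>n. Re (c n)) z = f z" if "cmod z \<le> 1" for z
  proof -
    have "f (cnj z) = cnj (f z)"
      by (simp add: f_def zeval_cnj)
    then have "(\<lambda>n. of_real (Re (c n)) * z ^ n) sums f z"
      using series[of z] series[of "cnj z"] that \<open>1 < r\<close> by (intro sums_powser_Re_coeffs) auto
    then show ?thesis
      unfolding arx_resp_def by (rule sums_unique[symmetric])
  qed
  ultimately show ?thesis
    unfolding f_def by (intro exI[of _ "\<lambda>n. Re (c n)"]) blast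
qed

lemma disc_abs_powser_real_poly_quotient:
  fixes P Q :: "real poly"
  assumes "\<And>z. cmod z \<le> 1 \<Longrightarrow> zeval Q z \<noteq> 0"
  shows "disc_abs_powser (\<lambda>z. zeval P z / zeval Q z)"
proof -
  obtain a where "summable (\<lambda>k. \<bar>a k\<bar>)" "\<And>z. cmod z \<le> 1 \<Longrightarrow> arx_resp a z = zeval P z / zeval Q z"
    using real_poly_quotient_arx_resp[OF assms, of P] by blast
  then show ?thesis
    by (intro disc_abs_powser_cong[OF disc_abs_powser_arx_resp])
qed

section \<open>The prediction-error cost of the closed loop\<close>

lemma integrable_continuous_mult_absolutely_integrable:
  fixes X Phi :: "real \<Rightarrow> real"
  assumes "continuous_on {a..b} X" "Phi absolutely_integrable_on {a..b}"
  shows "(\<lambda>w. X w * Phi w) integrable_on {a..b}"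
proof -
  have "X \<in> borel_measurable (lebesgue_on {a..b})"
    by (rule continuous_imp_measurable_on_sets_lebesgue[OF assms(1)]) simp
  moreover have "bounded (X ` {a..b})"
    by (rule compact_imp_bounded[OF compact_continuous_image[OF assms(1)]]) simp
  ultimately have "(\<lambda>w. X w * Phi w) absolutely_integrable_on {a..b}"
    using absolutely_integrable_bounded_measurable_product_real[of X "{a..b}" Phi] assms(2) by simp
  then show ?thesis
    using absolutely_integrable_on_def by blast
qed

locale closed_loop =
  fixes L Gm F C D Kn Kd Fs Fa :: "real poly" and lam :: real and Phi :: "real \<Rightarrow> real"
  assumes L0: "coeff L 0 = 0" and Gm0: "coeff Gm 0 = 1"
    and C0: "coeff C 0 = 1" and D0: "coeff D 0 = 1"
    and C_stable: "stable_qpoly (cpoly C)" and D_stable: "stable_qpoly (cpoly D)"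
    and H_stable: "tf_stable (cpoly C) (cpoly (Gm * D))"
    and K_stab: "stabilizing L Gm F Kn Kd"
    and F_fact: "F = Fs * Fa" and Fs0: "coeff Fs 0 = 1" and Fa0: "coeff Fa 0 = 1"
    and Fs_roots: "\<forall>q\<in>qroots (cpoly Fs). cmod q < 1"
    and Fa_roots: "\<forall>q\<in>qroots (cpoly Fa). cmod q > 1"
    and lam_nonneg: "0 \<le> lam"
    and Phi_nonneg: "\<forall>w. Phi w \<ge> 0"
    and Phi_int: "Phi absolutely_integrable_on {-pi..pi}"
begin

definition cl_poly :: "real poly" where
  "cl_poly = Gm * F * Kd + L * Kn"

definition Fa_refl :: "real poly" where
  "Fa_refl = smult (1 / lead_coeff Fa) (reflect_poly Fa)"

lemma Fa_nonzero: "Fa \<noteq> 0"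
  using Fa0 by auto

lemma Fa_star_eq_Fa_refl: "Fa_star Fa = cpoly Fa_refl"
  unfolding Fa_refl_def by (rule Fa_star_eq_reflect[OF Fa_nonzero])

lemma zeval_Fa_refl: "zeval Fa_refl z = poly (reflect_poly (cpoly Fa)) z / of_real (lead_coeff Fa)"
  by (simp add: Fa_refl_def cpoly_smult cpoly_reflect)

lemma Kd0: "coeff Kd 0 \<noteq> 0" and cl_poly_stable: "stable_qpoly (cpoly cl_poly)"
  using K_stab unfolding stabilizing_def cl_poly_def by auto

lemma F0: "coeff F 0 = 1"
  using Fs0 Fa0 by (simp add: F_fact coeff_mult_0)

lemma zeval_F: "zeval F z = zeval Fs z * zeval Fa z"
  by (simp add: F_fact)

lemma coeff_cl_poly_0: "coeff cl_poly 0 = coeff Kd 0"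
  unfolding cl_poly_def using Gm0 F0 L0 by (simp add: coeff_mult_0)

lemma zeval_Fa_refl_0: "zeval Fa_refl 0 = 1"
  unfolding zeval_Fa_refl using Fa_nonzero by (simp add: poly_0_coeff_0 coeff_map_poly degree_map_poly)

lemma nonzero_in_cball:
  assumes "cmod z \<le> 1"
  shows "zeval C z \<noteq> 0" "zeval D z \<noteq> 0" "zeval Fs z \<noteq> 0" "zeval Fa_refl z \<noteq> 0"
    "zeval cl_poly z \<noteq> 0"
proof -
  show "zeval C z \<noteq> 0" "zeval D z \<noteq> 0"
    using stable_qpoly_nonzero_in_cball[OF C_stable] stable_qpoly_nonzero_in_cball[OF D_stable]
      C0 D0 assms by (simp_all add: zeval_0)
  show "zeval Fs z \<noteq> 0"
    using poly_nonzero_in_cball_if_qroots_inside[OF Fs_roots] Fs0 assms by (simp add: zeval_0)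
  show "zeval Fa_refl z \<noteq> 0"
    using poly_reflect_nonzero_in_cball[of "cpoly Fa"] Fa_roots Fa_nonzero assms
    by (simp add: zeval_Fa_refl)
  show "zeval cl_poly z \<noteq> 0"
    using stable_qpoly_nonzero_in_cball[OF cl_poly_stable] Kd0 coeff_cl_poly_0 assms
    by (simp add: zeval_0)
qed

lemma Gm_nonzero_circle: "cmod z = 1 \<Longrightarrow> zeval Gm z \<noteq> 0"
  using tf_stable_denominator_nonzero_circle[OF H_stable] nonzero_in_cball(1) by fastforce

lemma norm_Fa_div_Fa_refl_circle:
  assumes "cmod z = 1"
  shows "cmod (zeval Fa z / zeval Fa_refl z) = \<bar>lead_coeff Fa\<bar>"
proof -
  have "cmod (zeval Fa_refl z) = cmod (zeval Fa z) / \<bar>lead_coeff Fa\<bar>"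
    using assms by (simp add: zeval_Fa_refl norm_divide norm_poly_reflect_circle)
  moreover have "zeval Fa_refl z \<noteq> 0"
    using nonzero_in_cball assms by simp
  ultimately show ?thesis
    using Fa_nonzero by (auto simp: norm_divide)
qed

definition ref_error :: "(nat \<Rightarrow> real) \<Rightarrow> (nat \<Rightarrow> real) \<Rightarrow> complex \<Rightarrow> complex" where
  "ref_error a b z =
     (arx_resp a z * zeval L z - arx_resp b z * zeval (Gm * F) z) * zeval Kd z / zeval cl_poly z"

text \<open>The factor U of the proof sketch.\<close>
definition noise_gain :: "(nat \<Rightarrow> real) \<Rightarrow> (nat \<Rightarrow> real) \<Rightarrow> complex \<Rightarrow> complex" where
  "noise_gain a b z = zeval (C * Fs * Fa_refl) z / zeval (D * cl_poly) z
     * (arx_resp a z * zeval Kd z + arx_resp b z * zeval Kn z)"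

lemma arx_cost_eq:
  "arx_cost L Gm F C D Kn Kd lam Phi a b = 1 / (2 * pi) * integral {-pi..pi} (\<lambda>w.
     (cmod (ref_error a b (cis (- w))))\<^sup>2 * Phi w
     + (lead_coeff Fa)\<^sup>2 * lam * (cmod (noise_gain a b (cis (- w))))\<^sup>2)"
proof -
  have "(let q = cis w; A = arx_resp a (inverse q); B = arx_resp b (inverse q);
            S = tfS L Gm F Kn Kd q; GS = tfGS L Gm F Kn Kd q;
            KS = tfKS L Gm F Kn Kd q; H = tfH C Gm D q
        in (cmod (A * GS - B * S))\<^sup>2 * Phi w + (cmod (A * H * S + B * H * KS))\<^sup>2 * lam)
      = (cmod (ref_error a b (cis (- w))))\<^sup>2 * Phi w
        + (lead_coeff Fa)\<^sup>2 * lam * (cmod (noise_gain a b (cis (- w))))\<^sup>2" for w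
  proof -
    define z where "z = cis (- w)"
    have z: "cmod z = 1" "inverse (cis w) = z"
      by (simp_all add: z_def cis_inverse)
    have cl: "cl_char L Gm F Kn Kd (cis w) = zeval cl_poly z"
      unfolding cl_char_def qeval_def cl_poly_def z(2) by simp
    have ref: "arx_resp a z * tfGS L Gm F Kn Kd (cis w) - arx_resp b z * tfS L Gm F Kn Kd (cis w)
        = ref_error a b z"
      unfolding tfGS_def tfS_def cl unfolding qeval_def z(2) ref_error_def
      by (simp add: diff_divide_distrib algebra_simps)
    have noise: "arx_resp a z * tfH C Gm D (cis w) * tfS L Gm F Kn Kd (cis w)
        + arx_resp b z * tfH C Gm D (cis w) * tfKS L Gm F Kn Kd (cis w)
        = zeval Fa z / zeval Fa_refl z * noise_gain a b z"
      unfolding tfH_def tfS_def tfKS_def cl unfolding qeval_def z(2) noise_gain_def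
      using nonzero_in_cball[of z] Gm_nonzero_circle[of z] z(1)
      by (simp add: zeval_F field_simps)
    have "(cmod (zeval Fa z / zeval Fa_refl z * noise_gain a b z))\<^sup>2
        = (lead_coeff Fa)\<^sup>2 * (cmod (noise_gain a b z))\<^sup>2"
      unfolding norm_mult power_mult_distrib norm_Fa_div_Fa_refl_circle[OF z(1)] by simp
    then show ?thesis
      unfolding Let_def z(2) z_def[symmetric] ref noise by (simp add: algebra_simps)
  qed
  then show ?thesis
    unfolding arx_cost_def by (simp only:)
qed

lemma continuous_on_ref_error:
  assumes "summable (\<lambda>k. \<bar>a k\<bar>)" "summable (\<lambda>k. \<bar>b k\<bar>)"
  shows "continuous_on (cball 0 1) (ref_error a b)"
  unfolding ref_error_def
  using continuous_on_disc_abs_powser[OF disc_abs_powser_arx_resp[OF assms(1)]]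
    continuous_on_disc_abs_powser[OF disc_abs_powser_arx_resp[OF assms(2)]] nonzero_in_cball(5)
  by (intro continuous_intros) auto

lemma disc_abs_powser_noise_gain:
  assumes "summable (\<lambda>k. \<bar>a k\<bar>)" "summable (\<lambda>k. \<bar>b k\<bar>)"
  shows "disc_abs_powser (noise_gain a b)"
  unfolding noise_gain_def
  using nonzero_in_cball(2,5)
  by (intro disc_abs_powser_mult disc_abs_powser_add disc_abs_powser_real_poly_quotient
      disc_abs_powser_arx_resp disc_abs_powser_poly assms) simp

lemma noise_gain_0: "arx_A a \<Longrightarrow> arx_B b \<Longrightarrow> noise_gain a b 0 = 1"
  using C0 Fs0 D0 Kd0 coeff_cl_poly_0 zeval_Fa_refl_0
  by (simp add: noise_gain_def arx_A_def arx_B_def arx_resp_0 zeval_0)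

lemma arx_cost_lower_bound:
  assumes "arx_A a" "arx_B b"
  shows "(lead_coeff Fa)\<^sup>2 * lam \<le> arx_cost L Gm F C D Kn Kd lam Phi a b"
proof -
  have sum: "summable (\<lambda>k. \<bar>a k\<bar>)" "summable (\<lambda>k. \<bar>b k\<bar>)"
    using assms unfolding arx_A_def arx_B_def by auto
  define r where "r w = (cmod (ref_error a b (cis (- w))))\<^sup>2 * Phi w" for w
  define g where "g w = (cmod (noise_gain a b (cis (- w))))\<^sup>2" for w
  define c where "c = (lead_coeff Fa)\<^sup>2 * lam"
  have r: "r integrable_on {-pi..pi}"
    unfolding r_def using continuous_on_circle_param[OF continuous_on_ref_error[OF sum]]
    by (intro integrable_continuous_mult_absolutely_integrable Phi_int continuous_intros)
  have g: "g integrable_on {-pi..pi}"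
    unfolding g_def
    using continuous_on_circle_param[OF continuous_on_disc_abs_powser[OF disc_abs_powser_noise_gain[OF sum]]]
    by (intro integrable_continuous_real continuous_intros)
  have cg: "(\<lambda>w. c * g w) integrable_on {-pi..pi}"
    by (rule integrable_on_mult_right[OF g])
  have "integral {-pi..pi} (\<lambda>w. c * g w) \<le> integral {-pi..pi} (\<lambda>w. r w + c * g w)"
    using Phi_nonneg by (intro integral_le integrable_add r cg) (simp add: r_def)
  moreover have "c * (2 * pi) \<le> integral {-pi..pi} (\<lambda>w. c * g w)"
    using integral_circle_cmod_power2_ge[OF disc_abs_powser_noise_gain[OF sum]] noise_gain_0[OF assms]
      lam_nonneg by (simp add: c_def g_def mult_left_mono)
  ultimately show ?thesis
    unfolding arx_cost_eq r_def g_def c_def by (simp add: field_simps)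
qed

definition Abar :: "complex \<Rightarrow> complex" where
  "Abar z = zeval Gm z * zeval D z / zeval C z * (zeval Fa z / zeval Fa_refl z)"

definition Bbar :: "complex \<Rightarrow> complex" where
  "Bbar z = zeval D z / zeval C z * (zeval L z / (zeval Fs z * zeval Fa_refl z))"

lemma arx_cost_optimal:
  assumes "\<And>z. cmod z \<le> 1 \<Longrightarrow> arx_resp a z = Abar z \<and> arx_resp b z = Bbar z"
  shows "arx_cost L Gm F C D Kn Kd lam Phi a b = (lead_coeff Fa)\<^sup>2 * lam"
proof -
  have "ref_error a b z = 0 \<and> noise_gain a b z = 1" if "cmod z \<le> 1" for z
  proof -
    have A: "arx_resp a z = Abar z" and B: "arx_resp b z = Bbar z"
      using assms[OF that] by auto
    note nz = nonzero_in_cball[OF that]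
    have "ref_error a b z = 0"
      unfolding ref_error_def A B Abar_def Bbar_def using nz by (simp add: zeval_F field_simps)
    moreover have "Abar z * zeval Kd z + Bbar z * zeval Kn z
        = zeval D z * zeval cl_poly z / (zeval C z * zeval Fs z * zeval Fa_refl z)"
      unfolding Abar_def Bbar_def using nz by (simp add: cl_poly_def zeval_F field_simps)
    then have "noise_gain a b z = 1"
      unfolding noise_gain_def A B using nz by simp
    ultimately show ?thesis
      by simp
  qed
  then show ?thesis
    unfolding arx_cost_eq by (simp add: content_real)
qed

lemma optimal_arx_exists:
  "\<exists>a b. arx_A a \<and> arx_B b \<and> (\<forall>z. cmod z \<le> 1 \<longrightarrow> arx_resp a z = Abar z \<and> arx_resp b z = Bbar z)"
proof -
  obtain a where a: "summable (\<lambda>k. \<bar>a k\<bar>)"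
    "\<And>z. cmod z \<le> 1 \<Longrightarrow> arx_resp a z = zeval (Gm * D * Fa) z / zeval (C * Fa_refl) z"
    using real_poly_quotient_arx_resp[of "C * Fa_refl" "Gm * D * Fa"] nonzero_in_cball by auto
  obtain b where b: "summable (\<lambda>k. \<bar>b k\<bar>)"
    "\<And>z. cmod z \<le> 1 \<Longrightarrow> arx_resp b z = zeval (D * L) z / zeval (C * Fs * Fa_refl) z"
    using real_poly_quotient_arx_resp[of "C * Fs * Fa_refl" "D * L"] nonzero_in_cball by auto
  have "arx_A a"
    using a arx_resp_0[of a] Gm0 D0 Fa0 C0 zeval_Fa_refl_0 by (simp add: arx_A_def zeval_0)
  moreover have "arx_B b"
    using b arx_resp_0[of b] L0 by (simp add: arx_B_def zeval_0)
  moreover have "arx_resp a z = Abar z \<and> arx_resp b z = Bbar z" if "cmod z \<le> 1" for z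
    using a(2)[OF that] b(2)[OF that] by (simp add: Abar_def Bbar_def)
  ultimately show ?thesis
    by blast
qed

end

theorem theorem1:
  fixes L Gm F C D Kn Kd Fs Fa :: "real poly"
    and lam :: real and Phi :: "real \<Rightarrow> real"
  assumes L0: "coeff L 0 = 0"
    and Gm0: "coeff Gm 0 = 1" and F0: "coeff F 0 = 1"
    and C0: "coeff C 0 = 1" and D0: "coeff D 0 = 1"
    and C_stable: "stable_qpoly (cpoly C)" and D_stable: "stable_qpoly (cpoly D)"
    and F_unit: "\<forall>q\<in>qroots (cpoly F). cmod q \<noteq> 1"
    and FD_coprime: "coprime F D"
    and H_stable: "tf_stable (cpoly C) (cpoly (Gm * D))"
    and H_inv_stable: "tf_inv_stable (cpoly C) (cpoly (Gm * D))"
    and K_stab: "stabilizing L Gm F Kn Kd"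
    and F_fact: "F = Fs * Fa"
    and Fs0: "coeff Fs 0 = 1" and Fa0: "coeff Fa 0 = 1"
    and Fs_roots: "\<forall>q\<in>qroots (cpoly Fs). cmod q < 1"
    and Fa_roots: "\<forall>q\<in>qroots (cpoly Fa). cmod q > 1"
    and lam_pos: "lam > 0"
    and Phi_nonneg: "\<forall>w. Phi w \<ge> 0"
    and Phi_even: "\<forall>w. Phi (- w) = Phi w"
    and Phi_int: "Phi absolutely_integrable_on {-pi..pi}"
  shows "\<exists>abar bbar.
           arx_A abar \<and> arx_B bbar \<and>
           (\<forall>q. cmod q \<ge> 1 \<longrightarrow>
               arx_resp abar (inverse q) =
                 qeval Gm q * qeval D q / qeval C q
                 * (qeval Fa q / poly (Fa_star Fa) (inverse q)) \<and>
               arx_resp bbar (inverse q) =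
                 qeval D q / qeval C q
                 * (qeval L q / (qeval Fs q * poly (Fa_star Fa) (inverse q)))) \<and>
           (\<forall>a b. arx_A a \<and> arx_B b \<longrightarrow>
               arx_cost L Gm F C D Kn Kd lam Phi abar bbar \<le> arx_cost L Gm F C D Kn Kd lam Phi a b) \<and>
           (\<forall>w. arx_cost L Gm F C D Kn Kd lam Phi abar bbar =
               (cmod (qeval Fa (cis w) / poly (Fa_star Fa) (inverse (cis w))))\<^sup>2 * lam)"
proof -
  interpret closed_loop L Gm F C D Kn Kd Fs Fa lam Phi
    using assms by unfold_locales auto
  obtain abar bbar where abar: "arx_A abar" and bbar: "arx_B bbar"
    and resp: "\<And>z. cmod z \<le> 1 \<Longrightarrow> arx_resp abar z = Abar z \<and> arx_resp bbar z = Bbar z"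
    using optimal_arx_exists by blast
  have cost: "arx_cost L Gm F C D Kn Kd lam Phi abar bbar = (lead_coeff Fa)\<^sup>2 * lam"
    using resp by (rule arx_cost_optimal)
  have inv: "cmod (inverse q) \<le> 1" if "1 \<le> cmod q" for q :: complex
    using that by (simp add: norm_inverse inverse_le_1_iff)
  have "cmod (qeval Fa (cis w) / poly (Fa_star Fa) (inverse (cis w))) = \<bar>lead_coeff Fa\<bar>" for w
    using norm_Fa_div_Fa_refl_circle[of "cis (- w)"] by (simp add: qeval_def Fa_star_eq_Fa_refl)
  then show ?thesis
    using abar bbar cost arx_cost_lower_bound resp[OF inv]
    by (intro exI[of _ abar] exI[of _ bbar]) (auto simp: Abar_def Bbar_def qeval_def Fa_star_eq_Fa_refl)
qed

end
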